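(* Let $(p,f)$ be an SCF-RT that is rationalizable within the class of Fechnerian RUM-CFs. Let $(x,y)\in C\setminus D$ and suppose there exists $z\in X$ with $(x,z),(y,z)\in D$. Then there is a number $\bar p(x,y)$ such that every Fechnerian RUM-CF rationalizing $(p,f)$ satisfies $G(y,x)(0)=\bar p(x,y)$. Moreover, if $p(x,z)\geq p(y,z)$, then $\bar p(x,y)=p(x,z)\,F(x,z)(\theta(y,z))$ if $p(y,z)>1/2$; $\bar p(x,y)=p(x,z)$ if $p(y,z)=1/2$; and $\bar p(x,y)=1-p(z,x)\,F(z,x)(\theta(z,y))$ if $p(y,z)<1/2$.
   Context: $X$ is a finite set of options; $C=\{(x,y): x,y\in X,\ x\neq y\}$; $D\subseteq C$ is a fixed non-empty set with $(x,y)\in D\Rightarrow (y,x)\in D$. An SCF $p$ assigns to each $(x,y)\in D$ a number $p(x,y)>0$ with $p(x,y)+p(y,x)=1$. An SCF-RT is a pair $(p,f)$ where $p$ is an SCF and $f$ assigns to each $(x,y)\in D$ a strictly positive density $f(x,y)$ on $\mathbb{R}^+$ with cdf $F(x,y)$. A RUM is a pair $(u,g)$ with $u:X\to\mathbb{R}$ and $g$ assigning to each $(x,y)\in C$ a density $g(x,y)$ on $\mathbb{R}$ (cdf $G(x,y)$) with $\int v\,g(x,y)(v)\,dv=u(x)-u(y)=:v(x,y)$, $g(x,y)(v)=g(y,x)(-v)$ for all $v$, and connected support. A RUM-CF is $(u,g,r)$ with $(u,g)$ a RUM and $r:\mathbb{R}^{++}\to\mathbb{R}^+$ continuous, strictly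 decreasing where $r(v)>0$, $\lim_{v\to0}r(v)=\infty$, $\lim_{v\to\infty}r(v)=0$; $r^{-1}(t)$ ($t>0$) is the inverse of $r$ restricted to $\{r>0\}$. It rationalizes $(p,f)$ if for all $(x,y)\in D$: $G(x,y)(0)=p(y,x)$ and $\frac{1-G(x,y)(r^{-1}(t))}{1-G(x,y)(0)}=F(x,y)(t)$ for all $t>0$. A RUM-CF is Fechnerian if there is a density $g$ on $\mathbb{R}$ with $g(\delta)=g(-\delta)>0$ for all $\delta\geq0$ such that $g(x,y)(v)=g(v-v(x,y))$ for all $(x,y)\in C$, $v\in\mathbb{R}$. For $(a,b)\in D$ with $p(a,b)>p(b,a)$, $\theta(a,b)>0$ is defined by $F(a,b)(\theta(a,b))=\frac{1}{2p(a,b)}$. *)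

theory Defs
  imports "HOL-Analysis.Analysis"
begin

definition Cset :: "'a set \<Rightarrow> ('a \<times> 'a) set" where
  "Cset X = {(x, y). x \<in> X \<and> y \<in> X \<and> x \<noteq> y}"

definition domain_ok :: "'a set \<Rightarrow> ('a \<times> 'a) set \<Rightarrow> bool" where
  "domain_ok X D \<longleftrightarrow> finite X \<and> D \<subseteq> Cset X \<and> D \<noteq> {} \<and>
     (\<forall>x y. (x, y) \<in> D \<longrightarrow> (y, x) \<in> D)"

definition dens_pos :: "(real \<Rightarrow> real) \<Rightarrow> bool" where
  "dens_pos h \<longleftrightarrow> h \<in> borel_measurable lborel \<and> (\<forall>t>0. 0 < h t) \<and>
     set_integrable lborel {0<..} h \<and> (LINT t:{0<..}|lborel. h t) = 1"

definition cdf_pos :: "(real \<Rightarrow> real) \<Rightarrow> real \<Rightarrow> real" where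
  "cdf_pos h t = (LINT s:{0<..t}|lborel. h s)"

definition dens_R :: "(real \<Rightarrow> real) \<Rightarrow> bool" where
  "dens_R h \<longleftrightarrow> h \<in> borel_measurable lborel \<and> (\<forall>v. 0 \<le> h v) \<and>
     integrable lborel h \<and> (\<integral>v. h v \<partial>lborel) = 1"

definition cdf_R :: "(real \<Rightarrow> real) \<Rightarrow> real \<Rightarrow> real" where
  "cdf_R h v = (LINT s:{..v}|lborel. h s)"

definition SCF :: "('a \<times> 'a) set \<Rightarrow> ('a \<Rightarrow> 'a \<Rightarrow> real) \<Rightarrow> bool" where
  "SCF D p \<longleftrightarrow> (\<forall>(x, y)\<in>D. 0 < p x y \<and> p x y + p y x = 1)"

definition SCF_RT :: "('a \<times> 'a) set \<Rightarrow> ('a \<Rightarrow> 'a \<Rightarrow> real) \<Rightarrow>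
    ('a \<Rightarrow> 'a \<Rightarrow> real \<Rightarrow> real) \<Rightarrow> bool" where
  "SCF_RT D p f \<longleftrightarrow> SCF D p \<and> (\<forall>(x, y)\<in>D. dens_pos (f x y))"

definition RUM :: "'a set \<Rightarrow> ('a \<Rightarrow> real) \<Rightarrow> ('a \<Rightarrow> 'a \<Rightarrow> real \<Rightarrow> real) \<Rightarrow> bool" where
  "RUM X u g \<longleftrightarrow> (\<forall>(x, y)\<in>Cset X.
      dens_R (g x y) \<and>
      integrable lborel (\<lambda>v. v * g x y v) \<and>
      (\<integral>v. v * g x y v \<partial>lborel) = u x - u y \<and>
      (\<forall>v. g x y v = g y x (- v)) \<and>
      connected (closure {v. 0 < g x y v}))"

definition CF :: "(real \<Rightarrow> real) \<Rightarrow> bool" where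
  "CF r \<longleftrightarrow> continuous_on {0<..} r \<and> (\<forall>v>0. 0 \<le> r v) \<and>
     (\<forall>v w. 0 < v \<longrightarrow> v < w \<longrightarrow> 0 < r v \<longrightarrow> 0 < r w \<longrightarrow> r w < r v) \<and>
     filterlim r at_top (at_right 0) \<and> (r \<longlongrightarrow> 0) at_top"

definition rinv :: "(real \<Rightarrow> real) \<Rightarrow> real \<Rightarrow> real" where
  "rinv r t = (THE v. 0 < v \<and> 0 < r v \<and> r v = t)"

definition RUM_CF :: "'a set \<Rightarrow> ('a \<Rightarrow> real) \<Rightarrow> ('a \<Rightarrow> 'a \<Rightarrow> real \<Rightarrow> real) \<Rightarrow>
    (real \<Rightarrow> real) \<Rightarrow> bool" where
  "RUM_CF X u g r \<longleftrightarrow> RUM X u g \<and> CF r"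

definition rationalizes :: "'a set \<Rightarrow> ('a \<times> 'a) set \<Rightarrow> ('a \<Rightarrow> real) \<Rightarrow>
    ('a \<Rightarrow> 'a \<Rightarrow> real \<Rightarrow> real) \<Rightarrow> (real \<Rightarrow> real) \<Rightarrow>
    ('a \<Rightarrow> 'a \<Rightarrow> real) \<Rightarrow> ('a \<Rightarrow> 'a \<Rightarrow> real \<Rightarrow> real) \<Rightarrow> bool" where
  "rationalizes X D u g r p f \<longleftrightarrow> RUM_CF X u g r \<and>
     (\<forall>(x, y)\<in>D. cdf_R (g x y) 0 = p y x \<and>
        (\<forall>t>0. (1 - cdf_R (g x y) (rinv r t)) / (1 - cdf_R (g x y) 0)
               = cdf_pos (f x y) t))"

definition fechnerian :: "'a set \<Rightarrow> ('a \<Rightarrow> real) \<Rightarrow> ('a \<Rightarrow> 'a \<Rightarrow> real \<Rightarrow> real) \<Rightarrow> bool" where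
  "fechnerian X u g \<longleftrightarrow> (\<exists>g0. dens_R g0 \<and> (\<forall>\<delta>\<ge>0. g0 \<delta> = g0 (- \<delta>) \<and> 0 < g0 \<delta>) \<and>
     (\<forall>(x, y)\<in>Cset X. \<forall>v. g x y v = g0 (v - (u x - u y))))"

definition theta :: "('a \<Rightarrow> 'a \<Rightarrow> real) \<Rightarrow> ('a \<Rightarrow> 'a \<Rightarrow> real \<Rightarrow> real) \<Rightarrow> 'a \<Rightarrow> 'a \<Rightarrow> real" where
  "theta p f a b = (THE t. 0 < t \<and> cdf_pos (f a b) t = 1 / (2 * p a b))"

end

theory Submission
  imports Defs
begin

(* In a Fechnerian model G(a,b)(w) = Phi (w - (u a - u b)), where Phi is the cdf of a symmetric,
   everywhere positive noise density. Hence p(a,b) = Phi (u a - u b), and the response-time condition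
   reads Phi (u a - u b - r^-1 t) = p(a,b) F(a,b)(t). If p(a,b) > 1/2 then u a - u b > 0 and
   r (u a - u b) > 0: otherwise r takes every positive value on (0, u a - u b], which keeps F(a,b)
   above 1/(2 p(a,b)) near 0. Taking t = r (u a - u b) then gives theta(a,b) = r (u a - u b).
   Since u x - u y = (u x - u z) - (u y - u z), the value G(y,x)(0) = Phi (u x - u y) is read off
   the response times at (x,z) when p(y,z) > 1/2, equals p(x,z) when p(y,z) = 1/2, and is read off
   the response times at (z,x), using the symmetry of Phi, when p(y,z) < 1/2. *)

lemma cdf_R_shift: "cdf_R (\<lambda>v. h (v - c)) w = cdf_R h (w - c)"
  unfolding cdf_R_def set_lebesgue_integral_def
  by (subst lborel_integral_real_affine[where c=1 and t=c])
     (auto intro!: Bochner_Integration.integral_cong split: split_indicator)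

lemma set_integral_pos_interval:
  fixes h :: "real \<Rightarrow> real"
  assumes int: "set_integrable lborel {a<..b} h" and "a < b" and pos: "\<And>x. x \<in> {a<..b} \<Longrightarrow> 0 < h x"
  shows "0 < (LINT x:{a<..b}|lborel. h x)"
proof -
  have int': "integrable lborel (\<lambda>x. indicator {a<..b} x * h x)"
    using int unfolding set_integrable_def by simp
  have nonneg: "AE x in lborel. 0 \<le> indicator {a<..b} x * h x"
    using pos by (auto split: split_indicator intro!: less_imp_le)
  have "(LINT x:{a<..b}|lborel. h x) \<noteq> 0"
  proof
    assume "(LINT x:{a<..b}|lborel. h x) = 0"
    then have "AE x in lborel. indicator {a<..b} x * h x = 0"
      using integral_nonneg_eq_0_iff_AE[OF int' nonneg] unfolding set_lebesgue_integral_def by simp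
    then have "AE x in lborel. x \<notin> {a<..b}"
      by (rule eventually_mono) (use pos in \<open>fastforce split: split_indicator\<close>)
    then have "emeasure lborel {a<..b} = 0"
      by (subst (asm) AE_iff_measurable[where N="{a<..b}"]) auto
    with \<open>a < b\<close> show False by simp
  qed
  moreover have "0 \<le> (LINT x:{a<..b}|lborel. h x)"
    unfolding set_lebesgue_integral_def using nonneg by (auto intro!: integral_nonneg_AE)
  ultimately show ?thesis by simp
qed

lemma dens_R_set_integrable:
  assumes "dens_R h" "A \<in> sets borel"
  shows "set_integrable lborel A h"
  using assms unfolding dens_R_def set_integrable_def
  by (intro integrable_mult_indicator) auto

lemma cdf_R_add_interval:
  assumes "dens_R h" "a \<le> b"
  shows "cdf_R h b = cdf_R h a + (LINT v:{a<..b}|lborel. h v)"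
proof -
  have "cdf_R h b = (LINT v:{..a} \<union> {a<..b}|lborel. h v)"
    unfolding cdf_R_def using assms(2) by (simp add: ivl_disj_un)
  also have "\<dots> = cdf_R h a + (LINT v:{a<..b}|lborel. h v)"
    unfolding cdf_R_def
    by (rule set_integral_Un) (auto intro!: dens_R_set_integrable[OF assms(1)])
  finally show ?thesis .
qed

lemma strict_mono_cdf_R:
  assumes "dens_R h" "\<And>v. 0 < h v"
  shows "strict_mono (cdf_R h)"
proof
  fix a b :: real
  assume "a < b"
  then have "0 < (LINT v:{a<..b}|lborel. h v)"
    using assms by (intro set_integral_pos_interval dens_R_set_integrable) auto
  then show "cdf_R h a < cdf_R h b"
    using cdf_R_add_interval[OF assms(1), of a b] \<open>a < b\<close> by simp
qed

lemma cdf_R_minus: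
  assumes h: "dens_R h" and sym: "\<And>v. h (- v) = h v"
  shows "cdf_R h (- w) = 1 - cdf_R h w"
proof -
  have "cdf_R h (- w) = (\<integral>v. indicator {w..} v * h v \<partial>lborel)"
    unfolding cdf_R_def set_lebesgue_integral_def
    by (subst lborel_integral_real_affine[where c="-1" and t=0])
       (auto simp: sym intro!: Bochner_Integration.integral_cong split: split_indicator)
  also have "\<dots> = (LINT v:{w<..}|lborel. h v)"
    unfolding set_lebesgue_integral_def
    by (intro integral_cong_AE)
       (use h in \<open>auto simp: dens_R_def intro!: eventually_mono[OF AE_lborel_singleton[of w]]
                   split: split_indicator\<close>)
  finally have upper: "cdf_R h (- w) = (LINT v:{w<..}|lborel. h v)" .
  have "{..w} \<union> {w<..} = (UNIV :: real set)" by auto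
  then have "1 = (LINT v:{..w} \<union> {w<..}|lborel. h v)"
    using h unfolding dens_R_def set_lebesgue_integral_def by simp
  also have "\<dots> = cdf_R h w + (LINT v:{w<..}|lborel. h v)"
    unfolding cdf_R_def by (rule set_integral_Un) (auto intro!: dens_R_set_integrable[OF h])
  finally show ?thesis using upper by simp
qed

lemma strict_mono_on_cdf_pos:
  assumes "dens_pos h"
  shows "strict_mono_on {0<..} (cdf_pos h)"
proof (rule strict_mono_onI)
  fix a b :: real
  assume "a \<in> {0<..}" "b \<in> {0<..}" "a < b"
  have int: "set_integrable lborel {0<..} h" using assms unfolding dens_pos_def by simp
  have "cdf_pos h b = (LINT t:{0<..a} \<union> {a<..b}|lborel. h t)"
    unfolding cdf_pos_def using \<open>a \<in> {0<..}\<close> \<open>a < b\<close> by (simp add: ivl_disj_un)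
  also have "\<dots> = cdf_pos h a + (LINT t:{a<..b}|lborel. h t)"
    unfolding cdf_pos_def
    by (rule set_integral_Un) (use \<open>a \<in> {0<..}\<close> in \<open>auto intro!: set_integrable_subset[OF int]\<close>)
  moreover have "0 < (LINT t:{a<..b}|lborel. h t)"
    using assms \<open>a \<in> {0<..}\<close> \<open>a < b\<close>
    by (intro set_integral_pos_interval set_integrable_subset[OF int]) (auto simp: dens_pos_def)
  ultimately show "cdf_pos h a < cdf_pos h b" by simp
qed

lemma ex_cdf_pos_less:
  assumes "dens_pos h" "0 < c"
  shows "\<exists>t>0. cdf_pos h t < c"
proof -
  let ?A = "\<lambda>n::nat. {0<..1 / real (Suc n)}"
  have "decseq ?A"
    by (intro decseq_SucI) (auto simp: frac_le order_trans)
  moreover have "(\<Inter>n. ?A n) = {}"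
  proof safe
    fix x
    assume x: "x \<in> (\<Inter>n. ?A n)"
    then have "0 < x" by auto
    then obtain n where "inverse (real (Suc n)) < x"
      using reals_Archimedean by blast
    moreover have "x \<in> ?A n"
      using x by (rule INT_D) simp
    ultimately show "x \<in> {}" by (simp add: inverse_eq_divide)
  qed
  moreover have "set_integrable lborel (?A 0) h"
    using assms(1) unfolding dens_pos_def by (auto intro: set_integrable_subset)
  ultimately have "(\<lambda>n. LINT t:?A n|lborel. h t) \<longlonglongrightarrow> (LINT t:{}|lborel. h t)"
    using set_integral_cont_down[of ?A lborel h] by simp
  then have "(\<lambda>n. cdf_pos h (1 / real (Suc n))) \<longlonglongrightarrow> 0"
    by (simp add: cdf_pos_def set_lebesgue_integral_def)
  then have "\<forall>\<^sub>F n in sequentially. cdf_pos h (1 / real (Suc n)) < c"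
    using assms(2) by (rule order_tendstoD(2))
  then obtain n where "cdf_pos h (1 / real (Suc n)) < c"
    by (auto simp: eventually_sequentially)
  then show ?thesis by (intro exI[of _ "1 / real (Suc n)"]) auto
qed

lemma theta_eqI:
  assumes "dens_pos (f a b)" "0 < t" "cdf_pos (f a b) t = 1 / (2 * p a b)"
  shows "theta p f a b = t"
  unfolding theta_def
proof (rule the_equality)
  show "0 < t \<and> cdf_pos (f a b) t = 1 / (2 * p a b)" using assms by simp
next
  fix s
  assume "0 < s \<and> cdf_pos (f a b) s = 1 / (2 * p a b)"
  then show "s = t"
    using strict_mono_on_eqD[OF strict_mono_on_cdf_pos[OF assms(1)]] assms(2,3) by force
qed

lemma CF_rinv_eq:
  assumes "CF r" "0 < w" "0 < r w"
  shows "rinv r (r w) = w"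
  unfolding rinv_def
proof (rule the_equality)
  show "0 < w \<and> 0 < r w \<and> r w = r w" using assms by simp
next
  fix v
  assume v: "0 < v \<and> 0 < r v \<and> r v = r w"
  have decr: "\<And>v w. 0 < v \<Longrightarrow> v < w \<Longrightarrow> 0 < r v \<Longrightarrow> 0 < r w \<Longrightarrow> r w < r v"
    using assms(1) unfolding CF_def by blast
  show "v = w"
    using decr[of v w] decr[of w v] v assms(2,3) by (cases v w rule: linorder_cases) auto
qed

lemma CF_attains_below_zero:
  assumes cf: "CF r" and "0 < v" "r v = 0" "0 < t"
  shows "\<exists>w\<in>{0<..v}. r w = t"
proof -
  have "\<forall>\<^sub>F s in at_right 0. t < r s"
    using cf unfolding CF_def filterlim_at_top_dense by simp
  then obtain b where "0 < b" and large: "\<And>s. 0 < s \<Longrightarrow> s < b \<Longrightarrow> t < r s"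
    unfolding eventually_at_right_field by auto
  define e where "e = min (b / 2) v"
  have e: "0 < e" "e < b" "e \<le> v"
    using \<open>0 < b\<close> \<open>0 < v\<close> unfolding e_def by auto
  have "continuous_on {e..v} r"
    using cf e unfolding CF_def by (auto elim!: continuous_on_subset)
  then obtain w where "e \<le> w" "w \<le> v" "r w = t"
    using IVT2'[of r v t e] \<open>r v = 0\<close> \<open>0 < t\<close> large[of e] e by auto
  then show ?thesis using e by auto
qed

lemma fechnerianE:
  assumes "fechnerian X u g"
  obtains g0 where "dens_R g0" "\<And>v. 0 < g0 v" "\<And>v. g0 (- v) = g0 v"
    "\<And>a b v. (a, b) \<in> Cset X \<Longrightarrow> g a b v = g0 (v - (u a - u b))"
proof -
  obtain g0 where "dens_R g0" and half: "\<forall>\<delta>\<ge>0. g0 \<delta> = g0 (- \<delta>) \<and> 0 < g0 \<delta>"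
    and shift: "\<forall>(a, b)\<in>Cset X. \<forall>v. g a b v = g0 (v - (u a - u b))"
    using assms unfolding fechnerian_def by blast
  have sym: "g0 (- v) = g0 v" for v
    using half[rule_format, of v] half[rule_format, of "- v"] by (cases "0 \<le> v") auto
  have pos: "0 < g0 v" for v
    using half[rule_format, of v] half[rule_format, of "- v"] by (cases "0 \<le> v") auto
  show thesis
    by (rule that[OF \<open>dens_R g0\<close> pos sym]) (use shift in auto)
qed

definition pbar ::
    "('a \<Rightarrow> 'a \<Rightarrow> real) \<Rightarrow> ('a \<Rightarrow> 'a \<Rightarrow> real \<Rightarrow> real) \<Rightarrow> 'a \<Rightarrow> 'a \<Rightarrow> 'a \<Rightarrow> real"
  where "pbar p f x y z =
    (if 1/2 < p y z then p x z * cdf_pos (f x z) (theta p f y z)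
     else if p y z = 1/2 then p x z
     else 1 - p z x * cdf_pos (f z x) (theta p f z y))"

locale fechnerian_rationalization =
  fixes X :: "'a set" and D :: "('a \<times> 'a) set"
    and p :: "'a \<Rightarrow> 'a \<Rightarrow> real" and f :: "'a \<Rightarrow> 'a \<Rightarrow> real \<Rightarrow> real"
    and u :: "'a \<Rightarrow> real" and g :: "'a \<Rightarrow> 'a \<Rightarrow> real \<Rightarrow> real" and r :: "real \<Rightarrow> real"
    and g0 :: "real \<Rightarrow> real"
  assumes domain: "domain_ok X D"
    and scf_rt: "SCF_RT D p f"
    and rationalizes: "rationalizes X D u g r p f"
    and noise_dens: "dens_R g0"
    and noise_pos: "\<And>v. 0 < g0 v"
    and noise_sym: "\<And>v. g0 (- v) = g0 v"
    and shifted_noise: "\<And>a b v. (a, b) \<in> Cset X \<Longrightarrow> g a b v = g0 (v - (u a - u b))"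
begin

abbreviation Phi :: "real \<Rightarrow> real" where "Phi \<equiv> cdf_R g0"

lemma Phi_minus: "Phi (- w) = 1 - Phi w"
  by (rule cdf_R_minus[of g0, OF noise_dens noise_sym])

lemma Phi_zero: "Phi 0 = 1/2"
  using Phi_minus[of 0] by simp

lemma strict_mono_Phi: "strict_mono Phi"
  by (rule strict_mono_cdf_R[OF noise_dens noise_pos])

lemma D_sym: "(a, b) \<in> D \<Longrightarrow> (b, a) \<in> D"
  and D_Cset: "(a, b) \<in> D \<Longrightarrow> (a, b) \<in> Cset X"
  using domain unfolding domain_ok_def by auto

lemma p_pos: "(a, b) \<in> D \<Longrightarrow> 0 < p a b"
  and p_complement: "(a, b) \<in> D \<Longrightarrow> p b a = 1 - p a b"
  and dens_pos_f: "(a, b) \<in> D \<Longrightarrow> dens_pos (f a b)"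
  using scf_rt unfolding SCF_RT_def SCF_def by auto

lemma CF_r: "CF r"
  using rationalizes unfolding rationalizes_def RUM_CF_def by simp

lemma cdf_R_g:
  assumes "(a, b) \<in> Cset X"
  shows "cdf_R (g a b) w = Phi (w - (u a - u b))"
proof -
  have "g a b = (\<lambda>v. g0 (v - (u a - u b)))"
    by (intro ext shifted_noise[OF assms])
  then show ?thesis by (simp add: cdf_R_shift)
qed

lemma choice_prob: "(a, b) \<in> D \<Longrightarrow> Phi (u a - u b) = p a b"
  using rationalizes cdf_R_g[OF D_Cset, of a b 0] Phi_minus[of "u a - u b"] p_complement[of a b]
  unfolding rationalizes_def by auto

lemma response_time_cdf:
  assumes ab: "(a, b) \<in> D" and "0 < t"
  shows "Phi (u a - u b - rinv r t) = p a b * cdf_pos (f a b) t"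
proof -
  have "(1 - cdf_R (g a b) (rinv r t)) / (1 - cdf_R (g a b) 0) = cdf_pos (f a b) t"
    using rationalizes ab \<open>0 < t\<close> unfolding rationalizes_def by auto
  moreover have "1 - cdf_R (g a b) w = Phi (u a - u b - w)" for w
    using cdf_R_g[OF D_Cset[OF ab], of w] Phi_minus[of "u a - u b - w"] by simp
  ultimately show ?thesis
    using choice_prob[OF ab] p_pos[OF ab] by (simp add: field_simps)
qed

lemma utility_gap_pos: "(a, b) \<in> D \<Longrightarrow> 1/2 < p a b \<Longrightarrow> 0 < u a - u b"
  using choice_prob[of a b] Phi_zero strict_mono_less[OF strict_mono_Phi, of 0 "u a - u b"] by simp

lemma CF_pos_at_utility_gap:
  assumes ab: "(a, b) \<in> D" and half: "1/2 < p a b"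
  shows "0 < r (u a - u b)"
proof (rule ccontr)
  let ?v = "u a - u b"
  assume "\<not> 0 < r ?v"
  moreover have "0 \<le> r ?v"
    using CF_r utility_gap_pos[OF ab half] unfolding CF_def by blast
  ultimately have "r ?v = 0" by simp
  have low: "1 / (2 * p a b) \<le> cdf_pos (f a b) t" if "0 < t" for t
  proof -
    obtain w where w: "0 < w" "w \<le> ?v" "r w = t"
      using CF_attains_below_zero[OF CF_r utility_gap_pos[OF ab half] \<open>r ?v = 0\<close> \<open>0 < t\<close>] by auto
    have "1/2 \<le> Phi (?v - w)"
      using w Phi_zero strict_mono_less_eq[OF strict_mono_Phi, of 0 "?v - w"] by simp
    also have "\<dots> = p a b * cdf_pos (f a b) t"
      using response_time_cdf[OF ab \<open>0 < t\<close>] CF_rinv_eq[OF CF_r, of w] w \<open>0 < t\<close> by simp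
    finally show ?thesis
      using p_pos[OF ab] by (simp add: field_simps)
  qed
  obtain t where t: "0 < t" "cdf_pos (f a b) t < 1 / (2 * p a b)"
    using ex_cdf_pos_less[OF dens_pos_f[OF ab], of "1 / (2 * p a b)"] p_pos[OF ab] by auto
  show False
    using low[OF t(1)] t(2) by linarith
qed

lemma theta_eq_CF:
  assumes ab: "(a, b) \<in> D" and half: "1/2 < p a b"
  shows "theta p f a b = r (u a - u b)"
proof -
  let ?v = "u a - u b"
  have rv: "0 < r ?v"
    using CF_pos_at_utility_gap[OF ab half] .
  have "Phi 0 = p a b * cdf_pos (f a b) (r ?v)"
    using response_time_cdf[OF ab rv] CF_rinv_eq[OF CF_r utility_gap_pos[OF ab half] rv] by simp
  then have "cdf_pos (f a b) (r ?v) = 1 / (2 * p a b)"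
    using Phi_zero p_pos[OF ab] by (simp add: field_simps)
  then show ?thesis
    by (rule theta_eqI[of f a b, OF dens_pos_f[OF ab] rv])
qed

lemma Phi_shift_by_theta:
  assumes ab: "(a, b) \<in> D" and cd: "(c, d) \<in> D" and half: "1/2 < p c d"
  shows "Phi (u a - u b - (u c - u d)) = p a b * cdf_pos (f a b) (theta p f c d)"
  using response_time_cdf[OF ab CF_pos_at_utility_gap[OF cd half]] theta_eq_CF[OF cd half]
    CF_rinv_eq[OF CF_r utility_gap_pos[OF cd half] CF_pos_at_utility_gap[OF cd half]] by simp

lemma cdf_R_g_zero_eq_pbar:
  assumes yx: "(y, x) \<in> Cset X" and xz: "(x, z) \<in> D" and yz: "(y, z) \<in> D"
  shows "cdf_R (g y x) 0 = pbar p f x y z"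
proof -
  have gyx: "cdf_R (g y x) 0 = Phi (u x - u y)"
    using cdf_R_g[OF yx] by simp
  consider "1/2 < p y z" | "p y z = 1/2" | "p y z < 1/2" by linarith
  then show ?thesis
  proof cases
    case 1
    then show ?thesis
      using gyx Phi_shift_by_theta[OF xz yz 1] by (simp add: pbar_def)
  next
    case 2
    then have "Phi (u y - u z) = Phi 0"
      using choice_prob[OF yz] Phi_zero by simp
    then have "u y - u z = 0"
      by (simp add: strict_mono_eq[OF strict_mono_Phi])
    then show ?thesis
      using gyx choice_prob[OF xz] 2 by (simp add: pbar_def)
  next
    case 3
    then have "1/2 < p z y" using p_complement[OF yz] by simp
    then have "Phi (u y - u x) = p z x * cdf_pos (f z x) (theta p f z y)"
      using Phi_shift_by_theta[OF D_sym[OF xz] D_sym[OF yz]] by simp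
    then show ?thesis
      using gyx Phi_minus[of "u y - u x"] 3 by (simp add: pbar_def)
  qed
qed

end

theorem theorem3:
  fixes X :: "'a set" and D :: "('a \<times> 'a) set"
    and p :: "'a \<Rightarrow> 'a \<Rightarrow> real" and f :: "'a \<Rightarrow> 'a \<Rightarrow> real \<Rightarrow> real"
    and x y z :: 'a
  assumes dom: "domain_ok X D"
    and rt: "SCF_RT D p f"
    and ratbl: "\<exists>u g r. rationalizes X D u g r p f \<and> fechnerian X u g"
    and xy: "(x, y) \<in> Cset X - D"
    and zX: "z \<in> X" and xz: "(x, z) \<in> D" and yz: "(y, z) \<in> D"
  shows "\<exists>pbar. (\<forall>u g r. rationalizes X D u g r p f \<and> fechnerian X u g
                      \<longrightarrow> cdf_R (g y x) 0 = pbar) \<and>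
           (p x z \<ge> p y z \<longrightarrow>
              (p y z > 1/2 \<longrightarrow> pbar = p x z * cdf_pos (f x z) (theta p f y z)) \<and>
              (p y z = 1/2 \<longrightarrow> pbar = p x z) \<and>
              (p y z < 1/2 \<longrightarrow> pbar = 1 - p z x * cdf_pos (f z x) (theta p f z y)))"
proof (intro exI[of _ "pbar p f x y z"] conjI allI impI)
  (* pbar is explicit. *)
  fix u g r
  assume "rationalizes X D u g r p f \<and> fechnerian X u g"
  then have rat: "rationalizes X D u g r p f" and fech: "fechnerian X u g" by simp_all
  have yx: "(y, x) \<in> Cset X"
    using xy unfolding Cset_def by auto
  from fech show "cdf_R (g y x) 0 = pbar p f x y z"
  proof (rule fechnerianE)
    fix g0
    assume "dens_R g0" "\<And>v. 0 < g0 v" "\<And>v. g0 (- v) = g0 v"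
      "\<And>a b v. (a, b) \<in> Cset X \<Longrightarrow> g a b v = g0 (v - (u a - u b))"
    with dom rt rat interpret fechnerian_rationalization X D p f u g r g0
      by unfold_locales
    show ?thesis
      using yx xz yz by (rule cdf_R_g_zero_eq_pbar)
  qed
qed (auto simp: pbar_def)

end
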